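(* Let $\mathcal{M}$ be the family of $3$-graphs defined in the context. A $3$-graph $\mathcal{H}$ is $\mathcal{M}$-free if and only if it is $\mathcal{M}$-hom-free.
   Context: A $3$-graph is a $3$-uniform hypergraph; $\mathcal{F}$-free means containing no member of $\mathcal{F}$ as a subgraph; "contained in" means isomorphic to a subgraph of. A map $f:V(F)\to V(\mathcal{H})$ is a homomorphism if $f(E)\in\mathcal{H}$ for every $E\in F$ (in particular $f$ is injective on each edge). $\mathcal{H}$ is $F$-hom-free if there is no homomorphism from $F$ to $\mathcal{H}$, and $\mathcal{F}$-hom-free if it is $F$-hom-free for all $F\in\mathcal{F}$. Transversal number $\tau(\mathcal{H})$: minimum size of a vertex set meeting every edge ($0$ if no edges). For $\ell\ge3$, $\mathcal{K}^3_{\ell+1}$: all $3$-graphs $F$ on at most $(\ell+1)+\binom{\ell+1}{2}$ vertices having an $(\ell+1)$-set $S$ (a core) every pair of which lies in an edge of $F$. Blowup of a $3$-graph $\mathcal{T}$ on $[s]$: replace vertex $i$ by a set of size $t_i\ge1$ (pairwise disjoint), each edge by the complete $3$-partite $3$-graph on the corresponding sets. $\mathcal{G}^1_n$: disjoint $A,B$, $|A|=\lfloor n/3\rfloor$, $|B|=\lceil 2n/3\rceil$, edges $\{a,b,b'\}$ with $a\in A$, $\{b,b'\}\subseteq B$. $\mathcal{G}^2_6$: all triples of $[6]$ except $\{1,2,3\},\{1,2,6\},\{3,4,5\},\{4,5,6\}$; for $n>6$, $\mathcal{G}^2_n$ is a blowup of $\mathcal{G}^2_6$ on $n$ vertices with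 maximum number of edges. $\mathcal{M}=M_1\cup M_2\cup M_3$ with $M_1=\{K_5^{3-}\}$ (complete $3$-graph on $5$ vertices minus an edge), $M_2$ = all $F\in\mathcal{K}^3_7$ with a core $S$ such that $\tau(F[S])\ge2$, $M_3$ = all $F\in\mathcal{K}^3_6$ not contained in $\mathcal{G}^1_n$ for any $n\ge1$ and not contained in $\mathcal{G}^2_n$ for any $n\ge6$. *)

theory Defs
  imports Main
begin

definition hg3 :: "'a set \<Rightarrow> 'a set set \<Rightarrow> bool" where
  "hg3 V E \<longleftrightarrow> finite V \<and> (\<forall>e\<in>E. e \<subseteq> V \<and> card e = 3)"

text \<open>Homomorphism F -> H (injectivity on edges is automatic since edges of H are 3-sets).\<close>
definition hom_map :: "'a set \<Rightarrow> 'a set set \<Rightarrow> 'b set \<Rightarrow> 'b set set \<Rightarrow> ('a \<Rightarrow> 'b) \<Rightarrow> bool" where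
  "hom_map VF EF VH EH f \<longleftrightarrow> f ` VF \<subseteq> VH \<and> (\<forall>e\<in>EF. f ` e \<in> EH)"

definition contained :: "'a set \<Rightarrow> 'a set set \<Rightarrow> 'b set \<Rightarrow> 'b set set \<Rightarrow> bool" where
  "contained VF EF VH EH \<longleftrightarrow> (\<exists>f. inj_on f VF \<and> hom_map VF EF VH EH f)"

definition transversal_number :: "'a set \<Rightarrow> 'a set set \<Rightarrow> nat" where
  "transversal_number V E = Min {card T | T. T \<subseteq> V \<and> (\<forall>e\<in>E. T \<inter> e \<noteq> {})}"

definition induced_edges :: "'a set set \<Rightarrow> 'a set \<Rightarrow> 'a set set" where
  "induced_edges E S = {e \<in> E. e \<subseteq> S}"

definition is_core :: "'a set \<Rightarrow> 'a set set \<Rightarrow> nat \<Rightarrow> 'a set \<Rightarrow> bool" where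
  "is_core V E k S \<longleftrightarrow> S \<subseteq> V \<and> card S = k \<and>
     (\<forall>x\<in>S. \<forall>y\<in>S. x \<noteq> y \<longrightarrow> (\<exists>e\<in>E. x \<in> e \<and> y \<in> e))"

text \<open>Membership in the family K^3_k (k = l+1).\<close>
definition inK :: "nat \<Rightarrow> 'a set \<Rightarrow> 'a set set \<Rightarrow> bool" where
  "inK k V E \<longleftrightarrow> hg3 V E \<and> card V \<le> k + (k choose 2) \<and> (\<exists>S. is_core V E k S)"

definition is_K5minus :: "'a set \<Rightarrow> 'a set set \<Rightarrow> bool" where
  "is_K5minus V E \<longleftrightarrow> hg3 V E \<and> card V = 5 \<and>
     (\<exists>t. t \<subseteq> V \<and> card t = 3 \<and> E = {e. e \<subseteq> V \<and> card e = 3} - {t})"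

text \<open>G^1_n on vertex set {0..<n}: A = {0..<n div 3}, B = {n div 3..<n}.\<close>
definition G1V :: "nat \<Rightarrow> nat set" where
  "G1V n = {0..<n}"

definition G1E :: "nat \<Rightarrow> nat set set" where
  "G1E n = {{a, b, b'} | a b b'. a < n div 3 \<and> n div 3 \<le> b \<and> b < n \<and>
                                 n div 3 \<le> b' \<and> b' < n \<and> b \<noteq> b'}"

definition G26E :: "nat set set" where
  "G26E = {e. e \<subseteq> {1..6} \<and> card e = 3} - {{1,2,3}, {1,2,6}, {3,4,5}, {4,5,6}}"

definition blowV :: "(nat \<Rightarrow> nat) \<Rightarrow> (nat \<times> nat) set" where
  "blowV t = {(i, j). i \<in> {1..6} \<and> j < t i}"

definition blowE :: "(nat \<Rightarrow> nat) \<Rightarrow> (nat \<times> nat) set set" where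
  "blowE t = {{(i1, j1), (i2, j2), (i3, j3)} | i1 j1 i2 j2 i3 j3.
               {i1, i2, i3} \<in> G26E \<and> j1 < t i1 \<and> j2 < t i2 \<and> j3 < t i3}"

definition valid_sizes :: "(nat \<Rightarrow> nat) \<Rightarrow> nat \<Rightarrow> bool" where
  "valid_sizes t n \<longleftrightarrow> (\<forall>i\<in>{1..6}. t i \<ge> 1) \<and> (\<Sum>i\<in>{1..6}. t i) = n"

definition is_G2 :: "nat \<Rightarrow> (nat \<times> nat) set \<Rightarrow> (nat \<times> nat) set set \<Rightarrow> bool" where
  "is_G2 n V E \<longleftrightarrow> (\<exists>t. valid_sizes t n \<and> V = blowV t \<and> E = blowE t \<and>
      (\<forall>t'. valid_sizes t' n \<longrightarrow> card (blowE t') \<le> card (blowE t)))"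

definition calM1 :: "(nat set \<times> nat set set) set" where
  "calM1 = {(V, E). is_K5minus V E}"

definition calM2 :: "(nat set \<times> nat set set) set" where
  "calM2 = {(V, E). inK 7 V E \<and>
      (\<exists>S. is_core V E 7 S \<and> transversal_number S (induced_edges E S) \<ge> 2)}"

definition calM3 :: "(nat set \<times> nat set set) set" where
  "calM3 = {(V, E). inK 6 V E \<and>
      \<not> (\<exists>n\<ge>1. contained V E (G1V n) (G1E n)) \<and>
      \<not> (\<exists>n\<ge>6. \<exists>GV GE. is_G2 n GV GE \<and> contained V E GV GE)}"

definition calM :: "(nat set \<times> nat set set) set" where
  "calM = calM1 \<union> calM2 \<union> calM3"

definition family_free :: "(nat set \<times> nat set set) set \<Rightarrow> 'a set \<Rightarrow> 'a set set \<Rightarrow> bool" where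
  "family_free FF V E \<longleftrightarrow> (\<forall>(VF, EF)\<in>FF. \<not> contained VF EF V E)"

definition family_hom_free :: "(nat set \<times> nat set set) set \<Rightarrow> 'a set \<Rightarrow> 'a set set \<Rightarrow> bool" where
  "family_hom_free FF V E \<longleftrightarrow> (\<forall>(VF, EF)\<in>FF. \<not> (\<exists>f. hom_map VF EF V E f))"

end

theory Submission
  imports Defs "HOL-Library.FuncSet"
begin

(* Every containment is a homomorphism, so M-hom-free 3-graphs are M-free. Conversely, a
   homomorphism f from a member F of M into a 3-graph is injective on every edge, and its image
   f(F), relabelled onto the natural numbers, is contained in the target. So it suffices that
   M is closed under edge-injective images. Such a map is injective on every vertex set whose
   pairs are covered by edges: it maps K_5^{3-} isomorphically, maps a core onto a core of the
   same size, and keeps the transversal number of the core at least 2. For M_3, a containment of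
   the image in G^1_n or G^2_n yields a homomorphism of F into it, and a homomorphism of F into
   G^1_n or into a blowup of G^2_6 lifts to an embedding into a large balanced blowup; balanced
   blowups of G^2_6 have the maximum number of edges, so they are themselves G^2_m. *)

lemma hom_map_comp:
  "hom_map VF EF VG EG f \<Longrightarrow> hom_map VG EG VH EH g \<Longrightarrow> hom_map VF EF VH EH (g \<circ> f)"
  unfolding hom_map_def image_comp[symmetric] by blast

lemma finite_inj_on_nat_bounded:
  assumes "finite A"
  obtains idx :: "'a \<Rightarrow> nat" and s where "inj_on idx A" "\<forall>v\<in>A. idx v < s" "0 < s"
proof -
  obtain idx :: "'a \<Rightarrow> nat" and n where idx: "idx ` A = {i. i < n}" "inj_on idx A"
    using finite_imp_inj_to_nat_seg[OF assms] by blast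
  have "idx v < Suc n" if "v \<in> A" for v
    using idx(1) that by (metis imageI less_SucI mem_Collect_eq)
  with idx(2) show thesis by (intro that[of idx "Suc n"]) auto
qed

lemma hom_map_inj_on_edge:
  assumes "hg3 VF EF" "hg3 V E" "hom_map VF EF V E f" "e \<in> EF"
  shows "inj_on f e"
proof (rule eq_card_imp_inj_on)
  show "card (f ` e) = card e" and "finite e"
    using assms unfolding hg3_def hom_map_def by (auto intro: card_ge_0_finite)
qed

lemma hg3_image:
  assumes "hg3 VF EF" "\<forall>e\<in>EF. inj_on g e"
  shows "hg3 (g ` VF) ((`) g ` EF)"
  using assms unfolding hg3_def by (auto simp: card_image)

lemma contained_hom_image:
  assumes F: "hg3 VF EF" and f: "hom_map VF EF V E f" and h: "inj_on h (f ` VF)"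
  shows "contained ((h \<circ> f) ` VF) ((`) (h \<circ> f) ` EF) V E"
  unfolding contained_def
proof (intro exI conjI)
  let ?k = "inv_into (f ` VF) h"
  have k_cancel: "?k ` (h \<circ> f) ` X = f ` X" if "X \<subseteq> VF" for X
    unfolding image_comp[symmetric] using that by (simp add: image_mono h)
  show "inj_on ?k ((h \<circ> f) ` VF)"
    by (rule inj_on_inv_into) (simp add: image_comp)
  show "hom_map ((h \<circ> f) ` VF) ((`) (h \<circ> f) ` EF) V E ?k"
    using f F k_cancel unfolding hom_map_def hg3_def by auto
qed

lemma inj_on_edges_hom_image:
  assumes "hg3 VF EF" "hg3 V E" "hom_map VF EF V E f" "inj_on h (f ` VF)"
  shows "\<forall>e\<in>EF. inj_on (h \<circ> f) e"
proof (intro ballI comp_inj_on)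
  fix e assume "e \<in> EF"
  with assms(1-3) show "inj_on f e" by (rule hom_map_inj_on_edge)
  show "inj_on h (f ` e)"
    using assms(1,4) \<open>e \<in> EF\<close> unfolding hg3_def by (blast intro: inj_on_subset)
qed

section \<open>Maps injective on edges\<close>

definition covers_pairs :: "'a set set \<Rightarrow> 'a set \<Rightarrow> bool" where
  "covers_pairs E S \<longleftrightarrow> (\<forall>x\<in>S. \<forall>y\<in>S. x \<noteq> y \<longrightarrow> (\<exists>e\<in>E. x \<in> e \<and> y \<in> e))"

lemma is_core_iff: "is_core V E k S \<longleftrightarrow> S \<subseteq> V \<and> card S = k \<and> covers_pairs E S"
  unfolding is_core_def covers_pairs_def ..

lemma inj_on_if_covers_pairs:
  assumes "covers_pairs E S" "\<forall>e\<in>E. inj_on g e"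
  shows "inj_on g S"
proof (rule inj_onI, rule ccontr)
  fix x y assume xy: "x \<in> S" "y \<in> S" "g x = g y" "x \<noteq> y"
  then obtain e where "e \<in> E" "x \<in> e" "y \<in> e"
    using assms(1) unfolding covers_pairs_def by blast
  with assms(2) xy(3,4) show False by (metis inj_on_eq_iff)
qed

lemma covers_pairs_image:
  assumes "covers_pairs E S"
  shows "covers_pairs ((`) g ` E) (g ` S)"
  unfolding covers_pairs_def
proof (intro ballI impI)
  fix x' y' assume "x' \<in> g ` S" "y' \<in> g ` S" "x' \<noteq> y'"
  then obtain x y where xy: "x \<in> S" "y \<in> S" "x \<noteq> y" "x' = g x" "y' = g y"
    by blast
  with assms obtain e where "e \<in> E" "x \<in> e" "y \<in> e"
    unfolding covers_pairs_def by blast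
  with xy(4,5) show "\<exists>e'\<in>(`) g ` E. x' \<in> e' \<and> y' \<in> e'" by blast
qed

lemma is_core_image:
  assumes "is_core V E k S" "\<forall>e\<in>E. inj_on g e"
  shows "is_core (g ` V) ((`) g ` E) k (g ` S)"
proof -
  have S: "S \<subseteq> V" "card S = k" "covers_pairs E S"
    using assms(1) unfolding is_core_iff by blast+
  have "card (g ` S) = k"
    using card_image[OF inj_on_if_covers_pairs[OF S(3) assms(2)]] S(2) by simp
  with S(1) covers_pairs_image[OF S(3)] show ?thesis
    unfolding is_core_iff by blast
qed

lemma inK_image:
  assumes "inK k V E" "\<forall>e\<in>E. inj_on g e"
  shows "inK k (g ` V) ((`) g ` E)"
proof -
  obtain S where "hg3 V E" "card V \<le> k + (k choose 2)" "is_core V E k S"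
    using assms(1) unfolding inK_def by blast
  moreover from this have "card (g ` V) \<le> card V"
    unfolding hg3_def by (blast intro: card_image_le)
  ultimately show ?thesis
    using assms(2) hg3_image is_core_image unfolding inK_def by (meson order_trans)
qed

lemma is_K5minus_covers_pairs:
  assumes "is_K5minus V E"
  shows "covers_pairs E V"
  unfolding covers_pairs_def
proof (intro ballI impI)
  fix x y assume xy: "x \<in> V" "y \<in> V" "x \<noteq> y"
  obtain t where V: "card V = 5" and E: "E = {e. e \<subseteq> V \<and> card e = 3} - {t}"
    using assms unfolding is_K5minus_def by blast
  then have "finite V" by (intro card_ge_0_finite) simp
  with V xy have "card (V - {x, y}) = 3" by (simp add: card_Diff_subset)
  then obtain z1 z2 z3 where z: "V - {x, y} = {z1, z2, z3}" "z1 \<noteq> z2"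
    unfolding card_3_iff by blast
  have edge: "{x, y, z} \<in> E" if "z \<in> V - {x, y}" "{x, y, z} \<noteq> t" for z
  proof -
    have "card {x, y, z} = 3" using that(1) xy(3) by auto
    with that xy(1,2) show ?thesis unfolding E by blast
  qed
  have z12: "z1 \<in> V - {x, y}" "z2 \<in> V - {x, y}"
    using z(1) by blast+
  then have "{x, y, z1} \<noteq> {x, y, z2}"
    using z(2) by blast
  then consider "{x, y, z1} \<noteq> t" | "{x, y, z2} \<noteq> t" by blast
  then show "\<exists>e\<in>E. x \<in> e \<and> y \<in> e"
    by cases (use edge z12 in blast)+
qed

lemma image_card_subsets:
  assumes "inj_on g V"
  shows "(`) g ` {e. e \<subseteq> V \<and> card e = k} = {e. e \<subseteq> g ` V \<and> card e = k}"
proof (intro equalityI subsetI)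
  fix e' assume "e' \<in> (`) g ` {e. e \<subseteq> V \<and> card e = k}"
  with assms show "e' \<in> {e. e \<subseteq> g ` V \<and> card e = k}"
    by (auto simp: card_image inj_on_subset)
next
  fix e' assume "e' \<in> {e. e \<subseteq> g ` V \<and> card e = k}"
  then obtain e where "e \<subseteq> V" "e' = g ` e" "card e' = k"
    by (auto simp: subset_image_iff)
  with assms show "e' \<in> (`) g ` {e. e \<subseteq> V \<and> card e = k}"
    by (auto simp: card_image inj_on_subset)
qed

lemma is_K5minus_image:
  assumes "is_K5minus V E" "inj_on g V"
  shows "is_K5minus (g ` V) ((`) g ` E)"
proof -
  obtain t where V: "hg3 V E" "card V = 5" and t: "t \<subseteq> V" "card t = 3"
    and E: "E = {e. e \<subseteq> V \<and> card e = 3} - {t}"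
    using assms(1) unfolding is_K5minus_def by blast
  have "(`) g ` E = (`) g ` {e. e \<subseteq> V \<and> card e = 3} - (`) g ` {t}"
    unfolding E using t(1) by (intro inj_on_image_set_diff[OF inj_on_image_Pow[OF assms(2)]]) auto
  also have "\<dots> = {e. e \<subseteq> g ` V \<and> card e = 3} - {g ` t}"
    using image_card_subsets[OF assms(2)] by simp
  finally have "(`) g ` E = {e. e \<subseteq> g ` V \<and> card e = 3} - {g ` t}" .
  moreover have "hg3 (g ` V) ((`) g ` E)"
    using V(1) assms(2) by (intro hg3_image) (auto simp: hg3_def intro: inj_on_subset)
  moreover have "card (g ` V) = 5"
    using V(2) card_image[OF assms(2)] by simp
  moreover have "g ` t \<subseteq> g ` V" "card (g ` t) = 3"
    using t card_image[OF inj_on_subset[OF assms(2) t(1)]] by auto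
  ultimately show ?thesis
    unfolding is_K5minus_def by (intro conjI exI[of _ "g ` t"])
qed

lemma two_le_transversal_number_iff:
  assumes "finite S" "\<forall>e\<in>F. e \<subseteq> S" "{} \<notin> F"
  shows "2 \<le> transversal_number S F \<longleftrightarrow> F \<noteq> {} \<and> (\<forall>x\<in>S. \<exists>e\<in>F. x \<notin> e)"
proof -
  define C where "C = {card T | T. T \<subseteq> S \<and> (\<forall>e\<in>F. T \<inter> e \<noteq> {})}"
  have "C \<subseteq> card ` Pow S"
    unfolding C_def by blast
  then have "finite C"
    using assms(1) by (meson finite_Pow_iff finite_imageI finite_subset)
  moreover have "C \<noteq> {}"
    using assms(2,3) unfolding C_def by (auto simp: Int_absorb1)
  ultimately have "2 \<le> transversal_number S F \<longleftrightarrow> (\<forall>c\<in>C. 2 \<le> c)"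
    unfolding transversal_number_def C_def[symmetric] by (rule Min_ge_iff)
  also have "\<dots> \<longleftrightarrow> (\<forall>T\<subseteq>S. (\<forall>e\<in>F. T \<inter> e \<noteq> {}) \<longrightarrow> 2 \<le> card T)"
    unfolding C_def by blast
  also have "\<dots> \<longleftrightarrow> F \<noteq> {} \<and> (\<forall>x\<in>S. \<exists>e\<in>F. x \<notin> e)"
  proof
    assume "\<forall>T\<subseteq>S. (\<forall>e\<in>F. T \<inter> e \<noteq> {}) \<longrightarrow> 2 \<le> card T"
    from this[rule_format, of "{}"] this[rule_format, of "{x}" for x]
    show "F \<noteq> {} \<and> (\<forall>x\<in>S. \<exists>e\<in>F. x \<notin> e)" by auto
  next
    assume F: "F \<noteq> {} \<and> (\<forall>x\<in>S. \<exists>e\<in>F. x \<notin> e)"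
    show "\<forall>T\<subseteq>S. (\<forall>e\<in>F. T \<inter> e \<noteq> {}) \<longrightarrow> 2 \<le> card T"
    proof (intro allI impI)
      fix T assume T: "T \<subseteq> S" "\<forall>e\<in>F. T \<inter> e \<noteq> {}"
      have "T \<noteq> {}" using F T(2) by blast
      moreover have "\<not> (\<exists>x. T = {x})" using F T by blast
      moreover have "finite T" using T(1) assms(1) by (rule finite_subset)
      ultimately show "2 \<le> card T"
        by (metis card_1_singleton_iff card_0_eq less_2_cases not_le)
    qed
  qed
  finally show ?thesis .
qed

lemma two_le_transversal_number_induced_iff:
  assumes "hg3 V E" "S \<subseteq> V"
  shows "2 \<le> transversal_number S (induced_edges E S) \<longleftrightarrow>
    induced_edges E S \<noteq> {} \<and> (\<forall>x\<in>S. \<exists>e\<in>induced_edges E S. x \<notin> e)"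
proof (rule two_le_transversal_number_iff)
  show "finite S"
    using assms finite_subset unfolding hg3_def by blast
  show "\<forall>e\<in>induced_edges E S. e \<subseteq> S" "{} \<notin> induced_edges E S"
    using assms(1) unfolding induced_edges_def hg3_def by auto
qed

lemma two_le_transversal_number_image:
  assumes E: "hg3 V E" "\<forall>e\<in>E. inj_on g e" and S: "S \<subseteq> V" "inj_on g S"
    and tn: "2 \<le> transversal_number S (induced_edges E S)"
  shows "2 \<le> transversal_number (g ` S) (induced_edges ((`) g ` E) (g ` S))"
proof -
  have image_induced: "g ` e \<in> induced_edges ((`) g ` E) (g ` S)" if "e \<in> induced_edges E S" for e
    using that unfolding induced_edges_def by blast
  from tn have "induced_edges E S \<noteq> {}" and avoid: "\<forall>x\<in>S. \<exists>e\<in>induced_edges E S. x \<notin> e"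
    using two_le_transversal_number_induced_iff[OF E(1) S(1)] by blast+
  then have "induced_edges ((`) g ` E) (g ` S) \<noteq> {}"
    using image_induced by blast
  moreover have "\<exists>e'\<in>induced_edges ((`) g ` E) (g ` S). y \<notin> e'" if "y \<in> g ` S" for y
  proof -
    obtain x where x: "x \<in> S" "y = g x" using \<open>y \<in> g ` S\<close> by blast
    then obtain e where e: "e \<in> induced_edges E S" "x \<notin> e" using avoid by blast
    then have "g x \<notin> g ` e"
      using S(2) x(1) by (simp add: induced_edges_def inj_on_image_mem_iff)
    with e(1) x(2) image_induced show ?thesis by blast
  qed
  ultimately show ?thesis
    using two_le_transversal_number_induced_iff[OF hg3_image[OF E] image_mono[OF S(1)]] by blast
qed

section \<open>Homomorphisms into G1\<close>

lemma G1E_iff: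
  "X \<in> G1E m \<longleftrightarrow> X \<subseteq> G1V m \<and> card X = 3 \<and> card (X \<inter> {..<m div 3}) = 1"
proof
  assume "X \<in> G1E m"
  then obtain a b b' where X: "X = {a, b, b'}" and ab: "a < m div 3" "m div 3 \<le> b" "b < m"
    "m div 3 \<le> b'" "b' < m" "b \<noteq> b'"
    unfolding G1E_def by blast
  then have "X \<inter> {..<m div 3} = {a}" by auto
  with X ab show "X \<subseteq> G1V m \<and> card X = 3 \<and> card (X \<inter> {..<m div 3}) = 1"
    unfolding G1V_def by auto
next
  assume X: "X \<subseteq> G1V m \<and> card X = 3 \<and> card (X \<inter> {..<m div 3}) = 1"
  then obtain a where a: "X \<inter> {..<m div 3} = {a}"
    by (auto simp: card_1_singleton_iff)
  have "finite X" "a \<in> X" using X a by (auto intro: card_ge_0_finite)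
  with X have "card (X - {a}) = 2"
    by (simp add: card_Diff_singleton_if)
  then obtain b b' where bb': "X - {a} = {b, b'}" "b \<noteq> b'"
    unfolding card_2_iff by blast
  have above: "m div 3 \<le> c" if "c \<in> X - {a}" for c
  proof (rule ccontr)
    assume "\<not> m div 3 \<le> c"
    with that have "c \<in> X \<inter> {..<m div 3}" by simp
    with a that show False by simp
  qed
  have "X = {a, b, b'}" using bb'(1) \<open>a \<in> X\<close> by blast
  moreover have "a < m div 3"
    using a by (metis IntD2 insertI1 lessThan_iff)
  moreover have "m div 3 \<le> b" "m div 3 \<le> b'"
    using above bb'(1) by simp_all
  moreover have "b < m" "b' < m"
  proof -
    have "{b, b'} \<subseteq> G1V m" using X bb'(1) by blast
    then show "b < m" "b' < m" unfolding G1V_def by simp_all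
  qed
  ultimately show "X \<in> G1E m"
    unfolding G1E_def using bb'(2) by (intro CollectI exI[of _ a] exI[of _ b] exI[of _ b'] conjI)
qed

lemma hom_G1_imp_contained_G1:
  assumes F: "hg3 VF EF" and \<phi>: "hom_map VF EF (G1V n) (G1E n) \<phi>"
  shows "\<exists>m\<ge>1. contained VF EF (G1V m) (G1E m)"
proof -
  have "finite VF" using F unfolding hg3_def by blast
  then obtain idx and s :: nat where idx: "inj_on idx VF" "\<forall>v\<in>VF. idx v < s" and "0 < s"
    by (rule finite_inj_on_nat_bounded)
  define A where "A = {..<n div 3}"
  define \<psi> where "\<psi> v = (if \<phi> v \<in> A then idx v else s + idx v)" for v
  have "idx x = idx y" if "x \<in> VF" "y \<in> VF" "\<psi> x = \<psi> y" for x y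
    using that idx(2) unfolding \<psi>_def by (auto split: if_splits)
  with idx(1) have \<psi>_inj: "inj_on \<psi> VF"
    unfolding inj_on_def by blast
  have \<psi>_part: "\<psi> v \<in> {..<(3 * s) div 3} \<longleftrightarrow> \<phi> v \<in> A" if "v \<in> VF" for v
    using idx(2) that unfolding \<psi>_def by auto
  have \<psi>_V: "\<psi> ` VF \<subseteq> G1V (3 * s)"
    using idx(2) unfolding \<psi>_def G1V_def by auto
  have "\<psi> ` e \<in> G1E (3 * s)" if e: "e \<in> EF" for e
  proof -
    have eV: "e \<subseteq> VF" and "card e = 3"
      using F e unfolding hg3_def by auto
    have "\<phi> ` e \<in> G1E n" using \<phi> e unfolding hom_map_def by blast
    then have "card (\<phi> ` e) = 3" and \<phi>A: "card (\<phi> ` e \<inter> A) = 1"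
      unfolding G1E_iff A_def by blast+
    have "inj_on \<phi> e"
      using \<open>card e = 3\<close> \<open>card (\<phi> ` e) = 3\<close> by (intro eq_card_imp_inj_on) (auto intro: card_ge_0_finite)
    have inj_e: "inj_on \<psi> e" using \<psi>_inj eV by (rule inj_on_subset)
    have "\<psi> ` e \<inter> {..<(3 * s) div 3} = \<psi> ` (e \<inter> \<phi> -` A)"
      using \<psi>_part eV inj_e by (auto simp: inj_on_image_Int)
    then have "card (\<psi> ` e \<inter> {..<(3 * s) div 3}) = card (\<phi> ` (e \<inter> \<phi> -` A))"
      using inj_e \<open>inj_on \<phi> e\<close> by (simp add: card_image inj_on_subset)
    also have "\<phi> ` (e \<inter> \<phi> -` A) = \<phi> ` e \<inter> A" by blast
    finally have "card (\<psi> ` e \<inter> {..<(3 * s) div 3}) = 1" using \<phi>A by simp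
    moreover have "card (\<psi> ` e) = 3" using inj_e \<open>card e = 3\<close> by (simp add: card_image)
    ultimately show ?thesis
      unfolding G1E_iff using \<psi>_V eV by blast
  qed
  with \<psi>_inj \<psi>_V have "contained VF EF (G1V (3 * s)) (G1E (3 * s))"
    unfolding contained_def hom_map_def by blast
  with \<open>0 < s\<close> show ?thesis by (intro exI[of _ "3 * s"]) simp
qed

section \<open>Blowups of G26\<close>

lemma blowE_iff: "X \<in> blowE t \<longleftrightarrow> X \<subseteq> blowV t \<and> card X = 3 \<and> fst ` X \<in> G26E"
proof
  assume "X \<in> blowE t"
  then obtain i1 j1 i2 j2 i3 j3 where X: "X = {(i1, j1), (i2, j2), (i3, j3)}"
    and g: "{i1, i2, i3} \<in> G26E" and j: "j1 < t i1" "j2 < t i2" "j3 < t i3"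
    unfolding blowE_def by blast
  from g have "card {i1, i2, i3} = 3" "{i1, i2, i3} \<subseteq> {1..6}"
    unfolding G26E_def by blast+
  then have "i1 \<noteq> i2" "i1 \<noteq> i3" "i2 \<noteq> i3" "{i1, i2, i3} \<subseteq> {1..6}"
    by (auto simp: card_insert_if split: if_splits)
  with X g j show "X \<subseteq> blowV t \<and> card X = 3 \<and> fst ` X \<in> G26E"
    unfolding blowV_def by auto
next
  assume X: "X \<subseteq> blowV t \<and> card X = 3 \<and> fst ` X \<in> G26E"
  then obtain i1 j1 i2 j2 i3 j3 where X_eq: "X = {(i1, j1), (i2, j2), (i3, j3)}"
    unfolding card_3_iff by auto
  with X have "j1 < t i1" "j2 < t i2" "j3 < t i3" "{i1, i2, i3} \<in> G26E"
    unfolding blowV_def by auto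
  with X_eq show "X \<in> blowE t"
    unfolding blowE_def by blast
qed

lemma G26E_subset_Pow: "G26E \<subseteq> Pow {1..6}"
  unfolding G26E_def by blast

lemma blowE_eq_UN_PiE:
  "blowE t = (\<Union>g\<in>G26E. (\<lambda>j. (\<lambda>i. (i, j i)) ` g) ` (\<Pi>\<^sub>E i\<in>g. {..<t i}))"
proof (intro equalityI subsetI)
  fix X assume "X \<in> blowE t"
  then have X: "X \<subseteq> blowV t" "card X = 3" "fst ` X \<in> G26E"
    unfolding blowE_iff by blast+
  then have "card (fst ` X) = card X"
    unfolding G26E_def by simp
  then have inj: "inj_on fst X"
    using X(2) by (intro eq_card_imp_inj_on) (auto intro: card_ge_0_finite)
  define j where "j = restrict (\<lambda>i. snd (the_inv_into X fst i)) (fst ` X)"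
  have j_fst: "j (fst x) = snd x" if "x \<in> X" for x
    using that inj unfolding j_def by (simp add: the_inv_into_f_f)
  have "(\<lambda>i. (i, j i)) ` fst ` X = X"
    unfolding image_image using j_fst by simp
  moreover have "j \<in> (\<Pi>\<^sub>E i\<in>fst ` X. {..<t i})"
    using X(1) j_fst unfolding j_def blowV_def by (auto simp: restrict_PiE_iff)
  ultimately show "X \<in> (\<Union>g\<in>G26E. (\<lambda>j. (\<lambda>i. (i, j i)) ` g) ` (\<Pi>\<^sub>E i\<in>g. {..<t i}))"
    using X(3) by blast
next
  fix X assume "X \<in> (\<Union>g\<in>G26E. (\<lambda>j. (\<lambda>i. (i, j i)) ` g) ` (\<Pi>\<^sub>E i\<in>g. {..<t i}))"
  then obtain g j where g: "g \<in> G26E" and j: "j \<in> (\<Pi>\<^sub>E i\<in>g. {..<t i})"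
    and X: "X = (\<lambda>i. (i, j i)) ` g"
    by blast
  have "g \<subseteq> {1..6}" "card g = 3" using g unfolding G26E_def by blast+
  with j X have "X \<subseteq> blowV t" "card X = 3" "fst ` X = g"
    unfolding blowV_def by (auto simp: card_image inj_on_convol_ident image_image)
  with g show "X \<in> blowE t"
    unfolding blowE_iff by simp
qed

lemma card_blowE: "card (blowE t) = (\<Sum>g\<in>G26E. \<Prod>i\<in>g. t i)"
proof -
  let ?sections = "\<lambda>g. (\<lambda>j. (\<lambda>i. (i, j i)) ` g) ` (\<Pi>\<^sub>E i\<in>g. {..<t i})"
  have finite_G26E: "finite G26E"
    using G26E_subset_Pow by (rule finite_subset) simp
  have finite_edge: "finite g" if "g \<in> G26E" for g
    using G26E_subset_Pow that by (auto intro: finite_subset)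
  have card_sections: "card (?sections g) = (\<Prod>i\<in>g. t i)" if "g \<in> G26E" for g
  proof -
    have "inj_on (\<lambda>j. (\<lambda>i. (i, j i)) ` g) (\<Pi>\<^sub>E i\<in>g. {..<t i})"
    proof (rule inj_onI)
      fix j j' assume jj': "j \<in> (\<Pi>\<^sub>E i\<in>g. {..<t i})" "j' \<in> (\<Pi>\<^sub>E i\<in>g. {..<t i})"
        "(\<lambda>i. (i, j i)) ` g = (\<lambda>i. (i, j' i)) ` g"
      then have "j i = j' i" if "i \<in> g" for i
        using that by (metis (no_types, lifting) Pair_inject imageE imageI)
      with jj'(1,2) show "j = j'" by (rule PiE_ext)
    qed
    then show ?thesis
      using finite_edge[OF that] by (simp add: card_image card_PiE)
  qed
  have "card (blowE t) = (\<Sum>g\<in>G26E. card (?sections g))"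
    unfolding blowE_eq_UN_PiE
  proof (rule card_UN_disjoint)
    show "finite G26E" by (rule finite_G26E)
    show "\<forall>g\<in>G26E. finite (?sections g)"
      using finite_edge by (auto intro: finite_PiE)
    show "\<forall>g\<in>G26E. \<forall>g'\<in>G26E. g \<noteq> g' \<longrightarrow> ?sections g \<inter> ?sections g' = {}"
      by (auto simp: image_image)
  qed
  also have "\<dots> = (\<Sum>g\<in>G26E. \<Prod>i\<in>g. t i)"
    using card_sections by (rule sum.cong[OF refl])
  finally show ?thesis .
qed

lemma G26E_eq:
  "G26E = set [{1,2,4}, {1,2,5}, {1,3,4}, {1,3,5}, {1,3,6}, {1,4,5}, {1,4,6}, {1,5,6},
               {2,3,4}, {2,3,5}, {2,3,6}, {2,4,5}, {2,4,6}, {2,5,6}, {3,4,6}, {3,5,6}]"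
  (is "_ = set ?L")
proof (intro equalityI subsetI)
  fix e assume "e \<in> G26E"
  have e: "e \<subseteq> {1..6}" "card e = 3" "e \<notin> {{1,2,3}, {1,2,6}, {3,4,5}, {4,5,6}}"
    using \<open>e \<in> G26E\<close> unfolding G26E_def by auto
  have all_triples: "\<forall>x\<in>{1,2,3,4,5,6::nat}. \<forall>y\<in>{1,2,3,4,5,6}. \<forall>z\<in>{1,2,3,4,5,6}.
      x \<noteq> y \<longrightarrow> x \<noteq> z \<longrightarrow> y \<noteq> z \<longrightarrow> {x,y,z} \<in> set ?L \<union> {{1,2,3}, {1,2,6}, {3,4,5}, {4,5,6}}"
    by (simp add: insert_commute) \<comment> \<open>ordered rewriting sorts the elements of both set literals\<close>
  obtain x y z where xyz: "e = {x, y, z}" "x \<noteq> y" "x \<noteq> z" "y \<noteq> z"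
    using e(2) unfolding card_3_iff by blast
  have "x \<in> {1,2,3,4,5,6}" "y \<in> {1,2,3,4,5,6}" "z \<in> {1,2,3,4,5,6}"
    using e(1) unfolding xyz(1) by auto
  from all_triples[rule_format, OF this xyz(2-4)]
  have "e \<in> set ?L \<union> {{1,2,3}, {1,2,6}, {3,4,5}, {4,5,6}}"
    unfolding xyz(1) .
  with e(3) show "e \<in> set ?L" by (meson UnE)
next
  fix e assume "e \<in> set ?L"
  moreover have "\<forall>e\<in>set ?L. e \<subseteq> {1..6} \<and> card e = 3 \<and> e \<notin> {{1,2,3}, {1,2,6}, {3,4,5}, {4,5,6}}"
    by code_simp \<comment> \<open>the simplifier cannot refute equations between set literals\<close>
  ultimately show "e \<in> G26E"
    unfolding G26E_def by blast
qed

lemma card_blowE_explicit: "card (blowE t) =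
    t 1 * t 2 * t 4 + t 1 * t 2 * t 5 + t 1 * t 3 * t 4 + t 1 * t 3 * t 5
  + t 1 * t 3 * t 6 + t 1 * t 4 * t 5 + t 1 * t 4 * t 6 + t 1 * t 5 * t 6
  + t 2 * t 3 * t 4 + t 2 * t 3 * t 5 + t 2 * t 3 * t 6 + t 2 * t 4 * t 5
  + t 2 * t 4 * t 6 + t 2 * t 5 * t 6 + t 3 * t 4 * t 6 + t 3 * t 5 * t 6"
proof -
  have "distinct [{1,2,4}, {1,2,5}, {1,3,4}, {1,3,5}, {1,3,6}, {1,4,5}, {1,4,6}, {1,5,6},
                  {2,3,4}, {2,3,5}, {2,3,6}, {2,4,5}, {2,4,6}, {2,5,6}, {3,4,6}, {3,5,6::nat}]"
    by code_simp
  then show ?thesis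
    unfolding card_blowE G26E_eq by (simp add: sum_list_distinct_conv_sum_set[symmetric] algebra_simps)
qed

(* The swaps 1-2, 4-5 and 3-6 are automorphisms of G26. AM-GM inside each of these pairs
   reduces the bound to one in u = P + Q and R alone, whose slack is (u - 2R)^2 (5u + 8R). *)
lemma G26E_polynomial_bound:
  fixes x1 x2 x3 x4 x5 x6 :: int
  assumes "0 \<le> x1" "0 \<le> x2" "0 \<le> x3" "0 \<le> x4" "0 \<le> x5" "0 \<le> x6"
  shows "27 * (x1*x2*x4 + x1*x2*x5 + x1*x3*x4 + x1*x3*x5 + x1*x3*x6 + x1*x4*x5
    + x1*x4*x6 + x1*x5*x6 + x2*x3*x4 + x2*x3*x5 + x2*x3*x6 + x2*x4*x5
    + x2*x4*x6 + x2*x5*x6 + x3*x4*x6 + x3*x5*x6) \<le> 2 * (x1+x2+x3+x4+x5+x6)^3"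
proof -
  define P Q R where "P = x1 + x2" and "Q = x4 + x5" and "R = x3 + x6"
  define u where "u = P + Q"
  have nonneg: "0 \<le> P" "0 \<le> Q" "0 \<le> R" "0 \<le> u"
    using assms by (simp_all add: P_def Q_def R_def u_def)
  have "x1*x2*x4 + x1*x2*x5 + x1*x3*x4 + x1*x3*x5 + x1*x3*x6 + x1*x4*x5
    + x1*x4*x6 + x1*x5*x6 + x2*x3*x4 + x2*x3*x5 + x2*x3*x6 + x2*x4*x5
    + x2*x4*x6 + x2*x5*x6 + x3*x4*x6 + x3*x5*x6 = P*Q*R + x1*x2*Q + x4*x5*P + x3*x6*u"
    (is "?N = _")
    unfolding P_def Q_def R_def u_def by (simp add: algebra_simps)
  have am_gm: "4*a*b \<le> (a+b)^2" for a b :: int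
    using zero_le_power2[of "a - b"] by (simp add: power2_eq_square algebra_simps)
  have "4*x1*x2*Q \<le> P^2*Q" "4*x4*x5*P \<le> Q^2*P" "4*x3*x6*u \<le> R^2*u" "4*P*Q*(4*R+u) \<le> u^2*(4*R+u)"
    unfolding P_def Q_def R_def u_def using nonneg
    by (intro mult_right_mono am_gm; simp add: P_def Q_def R_def u_def)+
  then have "16 * (P*Q*R + x1*x2*Q + x4*x5*P + x3*x6*u) \<le> u^2*(4*R+u) + 4*R^2*u"
    unfolding u_def by (simp add: power2_eq_square algebra_simps)
  moreover have "27*(u^2*(4*R+u) + 4*R^2*u) + (u-2*R)^2*(5*u+8*R) = 32*(u+R)^3"
    by (simp add: power2_eq_square power3_eq_cube algebra_simps)
  moreover have "0 \<le> (u-2*R)^2*(5*u+8*R)"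
    using nonneg by simp
  moreover have "x1+x2+x3+x4+x5+x6 = u + R"
    unfolding u_def P_def Q_def R_def by simp
  moreover have "27 * M \<le> 2 * S" if "16 * M \<le> A" "27 * A + D = 32 * S" "0 \<le> D" for M A D S :: int
    using that by linarith
  ultimately show ?thesis
    unfolding \<open>?N = _\<close> by metis
qed

lemma card_blowE_le:
  assumes "valid_sizes t (6 * s)"
  shows "card (blowE t) \<le> 16 * s^3"
proof -
  have "{1..6::nat} = {1, 2, 3, 4, 5, 6}" by auto
  with assms have sum: "t 1 + t 2 + t 3 + t 4 + t 5 + t 6 = 6 * s"
    unfolding valid_sizes_def by (simp add: add.assoc)
  have "int (27 * card (blowE t)) \<le> int (2 * (t 1 + t 2 + t 3 + t 4 + t 5 + t 6)^3)"
    unfolding card_blowE_explicit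
    using G26E_polynomial_bound[of "int (t 1)" "int (t 2)" "int (t 3)" "int (t 4)" "int (t 5)" "int (t 6)"]
    by simp
  then have "27 * card (blowE t) \<le> 2 * (t 1 + t 2 + t 3 + t 4 + t 5 + t 6)^3"
    by (simp only: of_nat_le_iff)
  also have "\<dots> = 27 * (16 * s^3)"
    unfolding sum by (simp add: power_mult_distrib)
  finally show ?thesis by simp
qed

lemma is_G2_uniform:
  assumes "0 < s"
  shows "is_G2 (6 * s) (blowV (\<lambda>_. s)) (blowE (\<lambda>_. s))"
proof -
  have "valid_sizes (\<lambda>_. s) (6 * s)"
    using assms unfolding valid_sizes_def by simp
  moreover have "card (blowE (\<lambda>_. s)) = 16 * s^3"
    unfolding card_blowE_explicit by (simp add: power3_eq_cube)
  ultimately show ?thesis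
    unfolding is_G2_def using card_blowE_le by metis
qed

lemma hom_G2_imp_contained_G2:
  assumes F: "hg3 VF EF" and G: "is_G2 n GV GE" and \<phi>: "hom_map VF EF GV GE \<phi>"
  shows "\<exists>m\<ge>6. \<exists>GV' GE'. is_G2 m GV' GE' \<and> contained VF EF GV' GE'"
proof -
  obtain t where GV: "GV = blowV t" and GE: "GE = blowE t"
    using G unfolding is_G2_def by blast
  have "finite VF" using F unfolding hg3_def by blast
  then obtain idx and s :: nat where idx: "inj_on idx VF" "\<forall>v\<in>VF. idx v < s" and "0 < s"
    by (rule finite_inj_on_nat_bounded)
  define \<psi> where "\<psi> v = (fst (\<phi> v), idx v)" for v
  have \<psi>_inj: "inj_on \<psi> VF"
    using idx(1) unfolding \<psi>_def inj_on_def by simp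
  have \<psi>_V: "\<psi> ` VF \<subseteq> blowV (\<lambda>_. s)"
    using \<phi> idx(2) unfolding GV hom_map_def blowV_def \<psi>_def by auto
  have "\<psi> ` e \<in> blowE (\<lambda>_. s)" if e: "e \<in> EF" for e
  proof -
    have eV: "e \<subseteq> VF" and "card e = 3"
      using F e unfolding hg3_def by auto
    have "\<phi> ` e \<in> blowE t" using \<phi> e unfolding GE hom_map_def by blast
    then have "fst ` \<psi> ` e \<in> G26E"
      unfolding blowE_iff \<psi>_def image_image by simp
    moreover have "card (\<psi> ` e) = 3"
      using card_image[OF inj_on_subset[OF \<psi>_inj eV]] \<open>card e = 3\<close> by simp
    ultimately show ?thesis
      unfolding blowE_iff using \<psi>_V eV by blast
  qed
  with \<psi>_inj \<psi>_V have "contained VF EF (blowV (\<lambda>_. s)) (blowE (\<lambda>_. s))"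
    unfolding contained_def hom_map_def by blast
  with is_G2_uniform[OF \<open>0 < s\<close>] show ?thesis
    by (intro exI[of _ "6 * s"]) (use \<open>0 < s\<close> in auto)
qed

lemma calM_hg3:
  assumes "(VF, EF) \<in> calM"
  shows "hg3 VF EF"
proof -
  have "is_K5minus VF EF \<or> inK 7 VF EF \<or> inK 6 VF EF"
    using assms unfolding calM_def calM1_def calM2_def calM3_def by blast
  then show ?thesis
    unfolding is_K5minus_def inK_def by blast
qed

lemma calM1_image:
  assumes "(VF, EF) \<in> calM1" "\<forall>e\<in>EF. inj_on g e"
  shows "(g ` VF, (`) g ` EF) \<in> calM1"
proof -
  have "is_K5minus VF EF" using assms(1) unfolding calM1_def by simp
  moreover from this have "inj_on g VF"
    using assms(2) by (intro inj_on_if_covers_pairs is_K5minus_covers_pairs)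
  ultimately show ?thesis
    unfolding calM1_def by (simp add: is_K5minus_image)
qed

lemma calM2_image:
  assumes "(VF, EF) \<in> calM2" "\<forall>e\<in>EF. inj_on g e"
  shows "(g ` VF, (`) g ` EF) \<in> calM2"
proof -
  obtain S where F: "inK 7 VF EF" and S: "is_core VF EF 7 S"
    and tn: "2 \<le> transversal_number S (induced_edges EF S)"
    using assms(1) unfolding calM2_def by blast
  have "hg3 VF EF" using F unfolding inK_def by blast
  moreover have "S \<subseteq> VF" "inj_on g S"
    using S assms(2) inj_on_if_covers_pairs unfolding is_core_iff by blast+
  ultimately have "2 \<le> transversal_number (g ` S) (induced_edges ((`) g ` EF) (g ` S))"
    using assms(2) tn by (intro two_le_transversal_number_image)
  with inK_image[OF F assms(2)] is_core_image[OF S assms(2)] show ?thesis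
    unfolding calM2_def by blast
qed

lemma calM3_image:
  assumes "(VF, EF) \<in> calM3" "\<forall>e\<in>EF. inj_on g e"
  shows "(g ` VF, (`) g ` EF) \<in> calM3"
proof -
  have F: "inK 6 VF EF" and not_G1: "\<not> (\<exists>n\<ge>1. contained VF EF (G1V n) (G1E n))"
    and not_G2: "\<not> (\<exists>n\<ge>6. \<exists>GV GE. is_G2 n GV GE \<and> contained VF EF GV GE)"
    using assms(1) unfolding calM3_def by blast+
  have "hg3 VF EF" using F unfolding inK_def by blast
  have g: "hom_map VF EF (g ` VF) ((`) g ` EF) g"
    unfolding hom_map_def by blast
  have "\<not> contained (g ` VF) ((`) g ` EF) (G1V n) (G1E n)" for n
  proof
    assume "contained (g ` VF) ((`) g ` EF) (G1V n) (G1E n)"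
    then obtain \<psi> where "hom_map (g ` VF) ((`) g ` EF) (G1V n) (G1E n) \<psi>"
      unfolding contained_def by blast
    with g have "hom_map VF EF (G1V n) (G1E n) (\<psi> \<circ> g)"
      by (rule hom_map_comp)
    with not_G1 hom_G1_imp_contained_G1[OF \<open>hg3 VF EF\<close>] show False by blast
  qed
  moreover have "\<not> contained (g ` VF) ((`) g ` EF) GV GE" if "is_G2 n GV GE" for n GV GE
  proof
    assume "contained (g ` VF) ((`) g ` EF) GV GE"
    then obtain \<psi> where "hom_map (g ` VF) ((`) g ` EF) GV GE \<psi>"
      unfolding contained_def by blast
    with g have "hom_map VF EF GV GE (\<psi> \<circ> g)"
      by (rule hom_map_comp)
    with not_G2 hom_G2_imp_contained_G2[OF \<open>hg3 VF EF\<close> that] show False by blast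
  qed
  ultimately show ?thesis
    using inK_image[OF F assms(2)] unfolding calM3_def by blast
qed

lemma calM_image:
  assumes "(VF, EF) \<in> calM" "\<forall>e\<in>EF. inj_on g e"
  shows "(g ` VF, (`) g ` EF) \<in> calM"
  using assms(1) calM1_image[OF _ assms(2)] calM2_image[OF _ assms(2)] calM3_image[OF _ assms(2)]
  unfolding calM_def by blast

theorem lemma3p2:
  fixes V :: "'a set" and E :: "'a set set"
  assumes "hg3 V E"
  shows "family_free calM V E \<longleftrightarrow> family_hom_free calM V E"
proof
  assume free: "family_free calM V E"
  show "family_hom_free calM V E"
    unfolding family_hom_free_def
  proof clarify
    fix VF EF f assume F: "(VF, EF) \<in> calM" and f: "hom_map VF EF V E f"
    have hF: "hg3 VF EF" using F by (rule calM_hg3)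
    then have "finite (f ` VF)" unfolding hg3_def by simp
    then obtain h :: "'a \<Rightarrow> nat" where h: "inj_on h (f ` VF)"
      by (metis finite_inj_on_nat_bounded)
    from F inj_on_edges_hom_image[OF hF assms f h]
    have "((h \<circ> f) ` VF, (`) (h \<circ> f) ` EF) \<in> calM"
      by (rule calM_image)
    with free contained_hom_image[OF hF f h] show False
      unfolding family_free_def by fastforce
  qed
next
  assume "family_hom_free calM V E"
  then show "family_free calM V E"
    unfolding family_free_def family_hom_free_def contained_def by fastforce
qed

end
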